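(* There exists an alternating Streett automaton $\mathcal{A}$ on infinite words, with all transition conditions in disjunctive normal form, that is $\exists$-GFG but for which there is no function $f\colon\Sigma^+\to\mathrm{Boxes}_{\mathcal{A}}$ with $f(ua)\in\mathrm{Boxes}_{\mathcal{A},a}$ for all $u\in\Sigma^*,a\in\Sigma$ such that, for every $w=w_0w_1\dots\in L(\mathcal{A})$, the sequence $f(w_0)f(w_0w_1)f(w_0w_1w_2)\cdots$ is universally accepting for $\mathcal{A}$.
   Context: An alternating automaton $\mathcal{A}=(\Sigma,Q,\iota,\delta,\alpha)$ has finite alphabet $\Sigma$, states $Q$, initial state $\iota$, transition function $\delta\colon Q\times\Sigma\to\mathcal{B}^+(Q)$ (positive Boolean formulas over atoms in $Q$); transitions are triples $(q,a,q')$. A Streett condition is a finite set of pairs $(B_i,G_i)$ of sets of transitions; an infinite transition sequence is accepting iff for every $i$ it visits $B_i$ finitely often or $G_i$ infinitely often. $L(\mathcal{A})$: in the model-checking game on $w=a_0a_1\dots$, from $\iota$, in round $i$ from $q_i$ the players descend $\delta(q_i,a_i)$, Eve choosing at disjunctions and Adam at conjunctions, to an atom $q_{i+1}$; Eve wins iff the transition sequence is accepting; $w\in L(\mathcal{A})$ iff Eve wins. Eve's letter game: each round Adam picks a letter and the players descend the transition condition of the current state over it; Eve wins iff the word is not in $L(\mathcal{A})$ or the path is accepting; $\mathcal{A}$ is $\exists$-GFG iff Eve wins it. Boxes: for a letter $a$, a local strategy chooses, for each $q$ and each subformula $\psi_1\vee\psi_2$ of $\delta(q,a)$, one disjunct;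 its box is the set of $(q,a,q')$ such that atom $q'$ is reachable from $\delta(q,a)$ following the local strategy at disjunctions and either conjunct at conjunctions; $\mathrm{Boxes}_{\mathcal{A},a}$ is the set of these boxes and $\mathrm{Boxes}_{\mathcal{A}}=\bigcup_a\mathrm{Boxes}_{\mathcal{A},a}$. A sequence of boxes $\beta_0\beta_1\dots$ is universally accepting if every transition sequence $(q_i,a_i,q_{i+1})_i$ with $q_0=\iota$ and $(q_i,a_i,q_{i+1})\in\beta_i$ for all $i$ is accepting. *)

theory Defs
  imports Main
begin

datatype 'q pbf = Atom 'q | Conj "'q pbf" "'q pbf" | Disj "'q pbf" "'q pbf"

fun atoms :: "'q pbf \<Rightarrow> 'q set" where
  "atoms (Atom q) = {q}"
| "atoms (Conj f g) = atoms f \<union> atoms g"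
| "atoms (Disj f g) = atoms f \<union> atoms g"

fun conj_clause :: "'q pbf \<Rightarrow> bool" where
  "conj_clause (Atom q) = True"
| "conj_clause (Conj f g) = (conj_clause f \<and> conj_clause g)"
| "conj_clause (Disj f g) = False"

fun dnf :: "'q pbf \<Rightarrow> bool" where
  "dnf (Disj f g) = (dnf f \<and> dnf g)"
| "dnf f = conj_clause f"

text \<open>Transitions (q, a, q'); letters and states are natural numbers, the
  actual alphabet and state set are finite carrier sets.\<close>
type_synonym trans = "nat \<times> nat \<times> nat"

record streett_aut =
  alphabet :: "nat set"
  states :: "nat set"
  init :: nat
  delta :: "nat \<Rightarrow> nat \<Rightarrow> nat pbf"
  cond :: "(trans set \<times> trans set) list"

definition wf_aut :: "streett_aut \<Rightarrow> bool" where
  "wf_aut A \<longleftrightarrow> finite (alphabet A) \<and> alphabet A \<noteq> {} \<and> finite (states A)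
     \<and> init A \<in> states A
     \<and> (\<forall>q\<in>states A. \<forall>a\<in>alphabet A. atoms (delta A q a) \<subseteq> states A)
     \<and> (\<forall>(B, G)\<in>set (cond A). B \<union> G \<subseteq> states A \<times> alphabet A \<times> states A)"

definition streett_accepting :: "streett_aut \<Rightarrow> (nat \<Rightarrow> trans) \<Rightarrow> bool" where
  "streett_accepting A \<rho> \<longleftrightarrow>
     (\<forall>(B, G)\<in>set (cond A). finite {i. \<rho> i \<in> B} \<or> infinite {i. \<rho> i \<in> G})"

text \<open>Descending a formula: at a disjunction Eve's choice function decides
  (True = left disjunct), at a conjunction Adam's does (True = left conjunct).
  Choice functions are indexed by the position (path from the root).\<close>
fun resolve :: "'q pbf \<Rightarrow> (bool list \<Rightarrow> bool) \<Rightarrow> (bool list \<Rightarrow> bool) \<Rightarrow> 'q" where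
  "resolve (Atom q) e d = q"
| "resolve (Conj f g) e d =
     (if d [] then resolve f (\<lambda>p. e (True # p)) (\<lambda>p. d (True # p))
      else resolve g (\<lambda>p. e (False # p)) (\<lambda>p. d (False # p)))"
| "resolve (Disj f g) e d =
     (if e [] then resolve f (\<lambda>p. e (True # p)) (\<lambda>p. d (True # p))
      else resolve g (\<lambda>p. e (False # p)) (\<lambda>p. d (False # p)))"

text \<open>Strategies (full information): Eve's and Adam's choices within a round
  depend on the history of transitions so far, the current letter, and the
  position in the current transition condition. The letter of each round is
  given by a function of the history (fixed word in the model-checking game,
  Adam's choice in the letter game).\<close>
type_synonym strat = "trans list \<Rightarrow> nat \<Rightarrow> bool list \<Rightarrow> bool"

definition cur_state :: "streett_aut \<Rightarrow> trans list \<Rightarrow> nat" where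
  "cur_state A h = (if h = [] then init A else snd (snd (last h)))"

fun hist :: "streett_aut \<Rightarrow> (trans list \<Rightarrow> nat) \<Rightarrow> strat \<Rightarrow> strat \<Rightarrow> nat \<Rightarrow> trans list" where
  "hist A lf \<sigma> \<tau> 0 = []"
| "hist A lf \<sigma> \<tau> (Suc i) =
     (let h = hist A lf \<sigma> \<tau> i; q = cur_state A h; a = lf h
      in h @ [(q, a, resolve (delta A q a) (\<sigma> h a) (\<tau> h a))])"

definition play :: "streett_aut \<Rightarrow> (trans list \<Rightarrow> nat) \<Rightarrow> strat \<Rightarrow> strat \<Rightarrow> nat \<Rightarrow> trans" where
  "play A lf \<sigma> \<tau> i = last (hist A lf \<sigma> \<tau> (Suc i))"

definition played_word :: "streett_aut \<Rightarrow> (trans list \<Rightarrow> nat) \<Rightarrow> strat \<Rightarrow> strat \<Rightarrow> nat \<Rightarrow> nat" where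
  "played_word A lf \<sigma> \<tau> i = lf (hist A lf \<sigma> \<tau> i)"

definition lang :: "streett_aut \<Rightarrow> (nat \<Rightarrow> nat) set" where
  "lang A = {w. (\<forall>i. w i \<in> alphabet A) \<and>
     (\<exists>\<sigma>. \<forall>\<tau>. streett_accepting A (play A (\<lambda>h. w (length h)) \<sigma> \<tau>))}"

definition exists_gfg :: "streett_aut \<Rightarrow> bool" where
  "exists_gfg A \<longleftrightarrow> (\<exists>\<sigma>. \<forall>lf \<tau>. (\<forall>h. lf h \<in> alphabet A) \<longrightarrow>
     played_word A lf \<sigma> \<tau> \<notin> lang A \<or> streett_accepting A (play A lf \<sigma> \<tau>))"

text \<open>Boxes. A local strategy for letter a gives, for every state q, a choice
  at every disjunction (by position) of delta q a.\<close>
fun reach :: "'q pbf \<Rightarrow> (bool list \<Rightarrow> bool) \<Rightarrow> 'q set" where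
  "reach (Atom q) c = {q}"
| "reach (Conj f g) c = reach f (\<lambda>p. c (True # p)) \<union> reach g (\<lambda>p. c (False # p))"
| "reach (Disj f g) c = (if c [] then reach f (\<lambda>p. c (True # p)) else reach g (\<lambda>p. c (False # p)))"

definition box :: "streett_aut \<Rightarrow> nat \<Rightarrow> (nat \<Rightarrow> bool list \<Rightarrow> bool) \<Rightarrow> trans set" where
  "box A a ls = {(q, a, q') | q q'. q \<in> states A \<and> q' \<in> reach (delta A q a) (ls q)}"

definition boxes_letter :: "streett_aut \<Rightarrow> nat \<Rightarrow> trans set set" where
  "boxes_letter A a = range (box A a)"

definition boxes :: "streett_aut \<Rightarrow> trans set set" where
  "boxes A = (\<Union>a\<in>alphabet A. boxes_letter A a)"

definition univ_accepting :: "streett_aut \<Rightarrow> (nat \<Rightarrow> trans set) \<Rightarrow> bool" where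
  "univ_accepting A \<beta> \<longleftrightarrow> (\<forall>\<rho>::nat \<Rightarrow> trans.
     fst (\<rho> 0) = init A \<and> (\<forall>i. snd (snd (\<rho> i)) = fst (\<rho> (Suc i))) \<and> (\<forall>i. \<rho> i \<in> \<beta> i)
     \<longrightarrow> streett_accepting A \<rho>)"

end

theory Submission
  imports Defs
begin

text \<open>Over a single letter the automaton cycles through 0, then 1 or 2 (chosen by Adam),
  then 3, then 4 or 5 (chosen by Eve), and back to 0. The Streett pairs forbid taking
  3 \<rightarrow> 4 infinitely often unless 0 \<rightarrow> 1 is taken infinitely often, and likewise for 5
  and 2. Eve wins by answering Adam's last choice (4 after 1, 5 after 2), which needs the
  memory of the previous round. A box, however, fixes Eve's move at 3 before Adam's move
  at 0 is known: if a sequence of boxes moves to 4 infinitely often, the path that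
  always passes through 2 violates the first pair, and symmetrically for 5 and 1.\<close>

definition ex_delta :: "nat \<Rightarrow> nat pbf" where
  "ex_delta q = (if q = 0 then Conj (Atom 1) (Atom 2) else if q = 1 \<or> q = 2 then Atom 3
     else if q = 3 then Disj (Atom 4) (Atom 5) else Atom 0)"

definition ex_aut :: streett_aut where
  "ex_aut = \<lparr>alphabet = {0}, states = {0..5}, init = 0, delta = (\<lambda>q a. ex_delta q),
     cond = [({(3,0,4)}, {(0,0,1)}), ({(3,0,5)}, {(0,0,2)})]\<rparr>"

lemma wf_ex_aut: "wf_aut ex_aut"
  by (auto simp: wf_aut_def ex_aut_def ex_delta_def)

lemma dnf_ex_delta: "dnf (ex_delta q)"
  by (simp add: ex_delta_def)

lemma streett_accepting_ex_aut_iff: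
  "streett_accepting ex_aut \<rho> \<longleftrightarrow>
     (\<forall>j\<in>{1,2}. finite {i. \<rho> i = (3,0,j+3)} \<or> infinite {i. \<rho> i = (0,0,j)})"
  by (simp add: streett_accepting_def ex_aut_def)

lemma resolve_ex_delta_3: "resolve (ex_delta 3) e d = (if e [] then 4 else 5)"
  by (simp add: ex_delta_def)

lemma resolve_ex_delta_into_middle: "resolve (ex_delta q) e d \<in> {1,2} \<Longrightarrow> q = 0"
  by (auto simp: ex_delta_def split: if_splits)

lemma resolve_ex_delta_into_3: "resolve (ex_delta q) e d = 3 \<Longrightarrow> q \<in> {1,2}"
  by (auto simp: ex_delta_def split: if_splits)

lemma play_unfold:
  "play A lf \<sigma> \<tau> i = (let h = hist A lf \<sigma> \<tau> i; q = cur_state A h; a = lf h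
     in (q, a, resolve (delta A q a) (\<sigma> h a) (\<tau> h a)))"
  by (simp add: play_def Let_def)

lemma fst_play_0: "fst (play A lf \<sigma> \<tau> 0) = init A"
  by (simp add: play_def Let_def cur_state_def)

lemma fst_play_Suc: "fst (play A lf \<sigma> \<tau> (Suc i)) = snd (snd (play A lf \<sigma> \<tau> i))"
  by (simp add: play_unfold[of A lf \<sigma> \<tau> "Suc i"] Let_def cur_state_def play_def)

lemma finite_visits_if_preceded:
  assumes "finite {i. \<rho> i = y}" and "\<And>k. \<rho> k = x \<Longrightarrow> \<exists>i. k = i + d \<and> \<rho> i = y"
  shows "finite {k. \<rho> k = x}"
proof -
  have "{k. \<rho> k = x} \<subseteq> (\<lambda>i. i + d) ` {i. \<rho> i = y}"
    using assms(2) by blast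
  then show ?thesis
    using assms(1) finite_subset by blast
qed

text \<open>Only consulted at state 3, where the history is nonempty, so the junk value of
  \<^term>\<open>last []\<close> does not matter.\<close>
definition eve_answer :: strat where
  "eve_answer h a p = (fst (last h) = 1)"

lemma eve_answer_preceded:
  assumes move: "play ex_aut (\<lambda>_. 0) eve_answer \<tau> k = (3, 0, j + 3)" and j: "j \<in> {1,2}"
  shows "\<exists>i. k = i + 2 \<and> play ex_aut (\<lambda>_. 0) eve_answer \<tau> i = (0, 0, j)"
proof -
  let ?P = "play ex_aut (\<lambda>_. 0) eve_answer \<tau>" and ?H = "hist ex_aut (\<lambda>_. 0) eve_answer \<tau>"
  have letter: "?P i = (fst (?P i), 0, snd (snd (?P i)))" for i
    by (simp add: play_unfold[of _ _ _ _ i] Let_def)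
  have target: "snd (snd (?P i)) = resolve (ex_delta (fst (?P i))) (eve_answer (?H i) 0) (\<tau> (?H i) 0)"
    for i by (simp add: play_unfold[of _ _ _ _ i] Let_def ex_aut_def)
  have chain: "fst (?P (Suc i)) = snd (snd (?P i))" for i
    by (rule fst_play_Suc)
  have P0: "fst (?P 0) = 0"
    by (simp add: fst_play_0 ex_aut_def)
  obtain m where m: "k = Suc m"
    using move P0 by (cases k) auto
  have "resolve (ex_delta 3) (eve_answer (?H (Suc m)) 0) (\<tau> (?H (Suc m)) 0) = j + 3"
    using move target[of k] m by simp
  then have choice: "(fst (?P m) = 1) = (j = 1)"
    using j by (auto simp: resolve_ex_delta_3 eve_answer_def play_def split: if_splits)
  have "resolve (ex_delta (fst (?P m))) (eve_answer (?H m) 0) (\<tau> (?H m) 0) = 3"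
    using move m chain[of m] target[of m] by simp
  then have "fst (?P m) \<in> {1,2}"
    by (rule resolve_ex_delta_into_3)
  with choice j have Pm: "fst (?P m) = j"
    by auto
  obtain i where i: "m = Suc i"
    using Pm P0 j by (cases m) auto
  have ij: "snd (snd (?P i)) = j"
    using Pm i chain[of i] by simp
  with j target[of i] have "fst (?P i) = 0"
    using resolve_ex_delta_into_middle by metis
  with ij letter[of i] have "?P i = (0, 0, j)"
    by simp
  then show ?thesis
    using m i by auto
qed

lemma eve_answer_wins: "streett_accepting ex_aut (play ex_aut (\<lambda>_. 0) eve_answer \<tau>)"
  unfolding streett_accepting_ex_aut_iff
  using finite_visits_if_preceded[OF _ eve_answer_preceded] by blast

lemma exists_gfg_ex_aut: "exists_gfg ex_aut"
  unfolding exists_gfg_def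
proof (intro exI allI impI disjI2)
  fix lf :: "trans list \<Rightarrow> nat" and \<tau>
  assume "\<forall>h. lf h \<in> alphabet ex_aut"
  then have "lf = (\<lambda>_. 0)"
    by (auto simp: ex_aut_def)
  then show "streett_accepting ex_aut (play ex_aut lf eve_answer \<tau>)"
    using eve_answer_wins by simp
qed

lemma zero_word_in_lang: "(\<lambda>_. 0) \<in> lang ex_aut"
  unfolding lang_def using eve_answer_wins by (auto simp: ex_aut_def)

lemma univ_accepting_state_seq:
  assumes "univ_accepting A \<beta>" and "s 0 = init A" and "\<And>i. (s i, a i, s (Suc i)) \<in> \<beta> i"
  shows "streett_accepting A (\<lambda>i. (s i, a i, s (Suc i)))"
  using assms unfolding univ_accepting_def by auto

definition box_choice :: "trans set \<Rightarrow> nat" where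
  "box_choice \<beta> = (if (3,0,4) \<in> \<beta> then 4 else 5)"

lemma box_ex_aut_contains:
  "{(0,0,1), (0,0,2), (1,0,3), (2,0,3), (4,0,0), (5,0,0)} \<subseteq> box ex_aut 0 ls"
  "(3, 0, box_choice (box ex_aut 0 ls)) \<in> box ex_aut 0 ls"
  by (auto simp: box_def box_choice_def ex_aut_def ex_delta_def)

definition route :: "(nat \<Rightarrow> trans set) \<Rightarrow> nat \<Rightarrow> nat \<Rightarrow> nat" where
  "route F j i = (if i mod 4 = 0 then 0 else if i mod 4 = 1 then j else if i mod 4 = 2 then 3
     else box_choice (F (i - 1)))"

lemma route_Suc:
  "route F j (Suc i) = (if i mod 4 = 0 then j else if i mod 4 = 1 then 3
     else if i mod 4 = 2 then box_choice (F i) else 0)"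
proof -
  have "i mod 4 = 0 \<or> i mod 4 = 1 \<or> i mod 4 = 2 \<or> i mod 4 = 3"
    by arith
  then show ?thesis
    by (elim disjE) (simp_all add: route_def mod_Suc)
qed

lemma route_step_cases:
  obtains "route F j i = 0" "route F j (Suc i) = j"
  | "route F j i = j" "route F j (Suc i) = 3"
  | "route F j i = 3" "route F j (Suc i) = box_choice (F i)"
  | "route F j i = box_choice (F (i - 1))" "route F j (Suc i) = 0"
proof -
  have "i mod 4 = 0 \<or> i mod 4 = 1 \<or> i mod 4 = 2 \<or> i mod 4 = 3"
    by arith
  then show thesis
    using that unfolding route_Suc by (elim disjE) (simp_all add: route_def)
qed

lemma box_choice_4_or_5: "box_choice \<beta> \<in> {4,5}"
  by (simp add: box_choice_def)

lemma route_in_boxes: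
  assumes "\<And>i. F i \<in> boxes_letter ex_aut 0" and "j \<in> {1,2}"
  shows "(route F j i, 0, route F j (Suc i)) \<in> F i"
proof -
  obtain ls where ls: "F i = box ex_aut 0 ls"
    using assms(1)[of i] by (auto simp: boxes_letter_def)
  show ?thesis
    using box_ex_aut_contains[of ls] assms(2) box_choice_4_or_5[of "F (i - 1)"]
    by (cases rule: route_step_cases[of F j i]) (auto simp: ls)
qed

lemma route_leaves_0_to: "route F j i = 0 \<Longrightarrow> j \<noteq> 0 \<Longrightarrow> route F j (Suc i) = j"
  using box_choice_4_or_5[of "F (i - 1)"] by (cases rule: route_step_cases[of F j i]) auto

lemma route_visits_choice:
  "route F j (4 * n + 2) = 3" "route F j (Suc (4 * n + 2)) = box_choice (F (4 * n + 2))"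
proof -
  have "(4 * n + 2) mod 4 = (2::nat)"
    by presburger
  then show "route F j (4 * n + 2) = 3" "route F j (Suc (4 * n + 2)) = box_choice (F (4 * n + 2))"
    by (simp_all only: route_def route_Suc) simp_all
qed

lemma route_not_accepting:
  assumes "j \<in> {1,2}" and "k \<in> {1,2}" and "j \<noteq> k"
    and inf: "infinite {n. box_choice (F (4 * n + 2)) = k + 3}"
  shows "\<not> streett_accepting ex_aut (\<lambda>i. (route F j i, 0, route F j (Suc i)))"
proof
  let ?\<rho> = "\<lambda>i. (route F j i, 0::nat, route F j (Suc i))"
  assume "streett_accepting ex_aut ?\<rho>"
  then have pair_k: "finite {i. ?\<rho> i = (3,0,k+3)} \<or> infinite {i. ?\<rho> i = (0,0,k)}"
    using assms(2) unfolding streett_accepting_ex_aut_iff by blast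
  have "(\<lambda>n. 4 * n + 2) ` {n. box_choice (F (4 * n + 2)) = k + 3} \<subseteq> {i. ?\<rho> i = (3,0,k+3)}"
    using route_visits_choice by auto
  moreover have "infinite ((\<lambda>n::nat. 4 * n + 2) ` {n. box_choice (F (4 * n + 2)) = k + 3})"
    using inf by (auto simp: finite_image_iff inj_on_def)
  ultimately have "infinite {i. ?\<rho> i = (3,0,k+3)}"
    using infinite_super by blast
  moreover have "{i. ?\<rho> i = (0,0,k)} = {}"
    using assms(1-3) route_leaves_0_to by fastforce
  ultimately show False
    using pair_k by (metis finite.emptyI)
qed

lemma box_seq_not_univ_accepting:
  assumes boxes: "\<And>i. F i \<in> boxes_letter ex_aut 0"
  shows "\<not> univ_accepting ex_aut F"
proof
  assume univ: "univ_accepting ex_aut F"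
  have "{n. box_choice (F (4 * n + 2)) = 4} \<union> {n. box_choice (F (4 * n + 2)) = 5} = UNIV"
    using box_choice_4_or_5 by auto
  then have "infinite {n. box_choice (F (4 * n + 2)) = 4} \<or> infinite {n. box_choice (F (4 * n + 2)) = 5}"
    by (metis finite_UnI infinite_UNIV_nat)
  then obtain k :: nat where k: "k \<in> {1,2}" "infinite {n. box_choice (F (4 * n + 2)) = k + 3}"
    by (auto intro: that[of 1] that[of 2])
  define j where "j = 3 - k"
  have j: "j \<in> {1,2}" "j \<noteq> k"
    using k(1) by (auto simp: j_def)
  have "route F j 0 = init ex_aut"
    by (simp add: route_def ex_aut_def)
  from univ_accepting_state_seq[OF univ this route_in_boxes[OF boxes j(1)]]
  have "streett_accepting ex_aut (\<lambda>i. (route F j i, 0, route F j (Suc i)))" .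
  then show False
    using route_not_accepting[OF j(1) k(1) j(2) k(2)] by contradiction
qed

lemma not_univ_accepting_on_zero_word:
  assumes "\<forall>u a. set u \<subseteq> alphabet ex_aut \<longrightarrow> a \<in> alphabet ex_aut \<longrightarrow> f (u @ [a]) \<in> boxes_letter ex_aut a"
  shows "\<not> univ_accepting ex_aut (\<lambda>i. f (map (\<lambda>_. 0) [0..<Suc i]))"
proof -
  have "f (map (\<lambda>_. 0) [0..<Suc i]) \<in> boxes_letter ex_aut 0" for i
    using assms[rule_format, of "map (\<lambda>_. 0) [0..<i]" 0] by (auto simp: ex_aut_def)
  then show ?thesis
    by (rule box_seq_not_univ_accepting)
qed

theorem mainTheorem12:
  shows "\<exists>A. wf_aut A \<and> (\<forall>q\<in>states A. \<forall>a\<in>alphabet A. dnf (delta A q a)) \<and> exists_gfg A \<and>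
    \<not> (\<exists>f :: nat list \<Rightarrow> trans set.
          (\<forall>u a. set u \<subseteq> alphabet A \<longrightarrow> a \<in> alphabet A \<longrightarrow> f (u @ [a]) \<in> boxes_letter A a) \<and>
          (\<forall>w\<in>lang A. univ_accepting A (\<lambda>i. f (map w [0..<Suc i]))))"
proof -
  have "\<forall>q\<in>states ex_aut. \<forall>a\<in>alphabet ex_aut. dnf (delta ex_aut q a)"
    by (simp add: ex_aut_def dnf_ex_delta)
  then show ?thesis
    using wf_ex_aut exists_gfg_ex_aut zero_word_in_lang not_univ_accepting_on_zero_word by blast
qed

end
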